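(* Let $1\le p<\infty$, $N\ge2$, and let $T_i=T_{f_i,\omega^{(i)}}$ ($1\le i\le N$) be unilateral pseudo-shifts on $\ell^p(\mathbb{N})$. Then $T_1,\dots,T_N$ are s-hypercyclic if and only if they are densely s-hypercyclic.
   Context: $\{e_m\}$ is the canonical basis of $\ell^p(\mathbb{N})$ over $\mathbb{K}\in\{\mathbb{R},\mathbb{C}\}$. For a strictly increasing $f:\mathbb{N}\to\mathbb{N}$ with $f(1)>1$ and a bounded, nonzero sequence of scalars $\omega=(w_{f(m)})_m$, $T_{f,\omega}(\sum_m\alpha_me_m)=\sum_mw_{f(m)}\alpha_{f(m)}e_m$. A vector $x$ is s-hypercyclic for operators $T_1,\dots,T_N$ on $X$ if the closure of $\{(T_1^nx,\dots,T_N^nx):n\in\mathbb{N}\}$ contains the diagonal $\{(y,\dots,y):y\in X\}$ of $\oplus_{i=1}^NX$; the operators are s-hypercyclic if such $x$ exists, and densely s-hypercyclic if the set of such $x$ is dense. *)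

theory Defs
  imports "HOL-Analysis.Analysis"
begin

text \<open>Sequences are indexed by \<nat> = {1,2,...}; we use nat \<Rightarrow> 'a and require the (unused)
  coordinate 0 to vanish.\<close>

definition lp_space :: "real \<Rightarrow> (nat \<Rightarrow> 'a::real_normed_vector) set" where
  "lp_space p = {x. x 0 = 0 \<and> summable (\<lambda>m. norm (x m) powr p)}"

definition lp_norm :: "real \<Rightarrow> (nat \<Rightarrow> 'a::real_normed_vector) \<Rightarrow> real" where
  "lp_norm p x = (\<Sum>m. norm (x m) powr p) powr (1 / p)"

definition pseudo_shift :: "(nat \<Rightarrow> nat) \<Rightarrow> (nat \<Rightarrow> 'a::real_normed_field)
    \<Rightarrow> (nat \<Rightarrow> 'a) \<Rightarrow> (nat \<Rightarrow> 'a)" where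
  "pseudo_shift f w x = (\<lambda>m. if m = 0 then 0 else w (f m) * x (f m))"

definition pseudo_shift_data :: "(nat \<Rightarrow> nat) \<Rightarrow> (nat \<Rightarrow> 'a::real_normed_field) \<Rightarrow> bool" where
  "pseudo_shift_data f w \<longleftrightarrow> strict_mono_on {1..} f \<and> f 1 > 1 \<and>
     (\<exists>B. \<forall>m\<ge>1. norm (w (f m)) \<le> B) \<and> (\<forall>m\<ge>1. w (f m) \<noteq> 0)"

text \<open>x is s-hypercyclic for T_0,...,T_{N-1} on \<ell>^p: the closure of
  {(T_1^n x,...,T_N^n x) : n \<in> \<nat>} in the direct sum contains the diagonal.\<close>
definition s_hypercyclic_vector :: "real \<Rightarrow> nat \<Rightarrow> (nat \<Rightarrow> (nat \<Rightarrow> 'a::real_normed_vector) \<Rightarrow> (nat \<Rightarrow> 'a))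
    \<Rightarrow> (nat \<Rightarrow> 'a) \<Rightarrow> bool" where
  "s_hypercyclic_vector p N T x \<longleftrightarrow> x \<in> lp_space p \<and>
     (\<forall>y \<in> lp_space p. \<forall>e > 0. \<exists>n\<ge>1. \<forall>i<N. lp_norm p ((T i ^^ n) x - y) < e)"

definition s_hypercyclic :: "real \<Rightarrow> nat \<Rightarrow> (nat \<Rightarrow> (nat \<Rightarrow> 'a::real_normed_vector) \<Rightarrow> (nat \<Rightarrow> 'a)) \<Rightarrow> bool" where
  "s_hypercyclic p N T \<longleftrightarrow> (\<exists>x. s_hypercyclic_vector p N T x)"

definition densely_s_hypercyclic :: "real \<Rightarrow> nat \<Rightarrow> (nat \<Rightarrow> (nat \<Rightarrow> 'a::real_normed_vector) \<Rightarrow> (nat \<Rightarrow> 'a)) \<Rightarrow> bool" where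
  "densely_s_hypercyclic p N T \<longleftrightarrow>
     (\<forall>z \<in> lp_space p. \<forall>e > 0. \<exists>x. s_hypercyclic_vector p N T x \<and> lp_norm p (x - z) < e)"

end

theory Submission
  imports Defs
begin

text \<open>A pseudo-shift reads (T u)(m) off the coordinate f(m) > m, so T_i^n u does not
  depend on the first n coordinates of u. Hence changing an s-hypercyclic vector x in
  finitely many coordinates yields again an s-hypercyclic vector, provided x approximates
  every target along arbitrarily late iterates. The latter holds for any s-hypercyclic
  vector: bumping the target in a far-out coordinate excludes any finitely many early
  iterates. Since such finite modifications of x are dense in \<ell>^p, density follows.\<close>

lemma lp_space_diff:
  fixes u v :: "nat \<Rightarrow> 'a::real_normed_vector"
  assumes p: "p > 0" and u: "u \<in> lp_space p" and v: "v \<in> lp_space p"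
  shows "u - v \<in> lp_space p"
proof -
  have su: "summable (\<lambda>m. norm (u m) powr p)" and sv: "summable (\<lambda>m. norm (v m) powr p)"
    using u v by (auto simp: lp_space_def)
  have bound: "norm (u m - v m) powr p \<le> 2 powr p * (norm (u m) powr p + norm (v m) powr p)" for m
  proof -
    have "norm (u m - v m) \<le> 2 * max (norm (u m)) (norm (v m))"
      using norm_triangle_ineq4[of "u m" "v m"] by linarith
    then have "norm (u m - v m) powr p \<le> (2 * max (norm (u m)) (norm (v m))) powr p"
      using p by (intro powr_mono2) auto
    also have "\<dots> = 2 powr p * max (norm (u m)) (norm (v m)) powr p"
      by (simp add: powr_mult)
    also have "\<dots> \<le> 2 powr p * (norm (u m) powr p + norm (v m) powr p)"
      by (intro mult_left_mono) (auto simp: max_def)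
    finally show ?thesis .
  qed
  have "summable (\<lambda>m. norm (u m - v m) powr p)"
    by (rule summable_comparison_test[OF _ summable_mult[OF summable_add[OF su sv]]])
       (use bound in auto)
  then show ?thesis using u v by (simp add: lp_space_def)
qed

lemma lp_space_eventually_eq:
  fixes u v :: "nat \<Rightarrow> 'a::real_normed_vector"
  assumes "u \<in> lp_space p" and "v 0 = 0" and "eventually (\<lambda>m. v m = u m) sequentially"
  shows "v \<in> lp_space p"
proof -
  have "eventually (\<lambda>m. norm (v m) powr p = norm (u m) powr p) sequentially"
    using assms(3) by eventually_elim simp
  then show ?thesis using assms(1,2) by (simp add: lp_space_def summable_cong)
qed

lemma lp_space_fun_upd:
  assumes "y \<in> lp_space p" and "j \<noteq> 0"
  shows "y(j := c) \<in> lp_space p"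
proof (rule lp_space_eventually_eq[OF assms(1)])
  show "(y(j := c)) 0 = 0" using assms by (simp add: lp_space_def)
  show "eventually (\<lambda>m. (y(j := c)) m = y m) sequentially"
    unfolding eventually_sequentially by (rule exI[of _ "Suc j"]) simp
qed

lemma lp_norm_less_iff:
  assumes p: "p > 0" and s: "summable (\<lambda>m. norm (v m) powr p)" and d: "d > 0"
  shows "lp_norm p v < d \<longleftrightarrow> (\<Sum>m. norm (v m) powr p) < d powr p"
proof -
  define S where "S = (\<Sum>m. norm (v m) powr p)"
  have S: "S \<ge> 0" unfolding S_def using s by (intro suminf_nonneg) auto
  have mono: "a powr (1/p) < b powr (1/p) \<longleftrightarrow> a < b" if "0 \<le> a" "0 \<le> b" for a b :: real
    using that p by (smt (verit) divide_pos_pos powr_less_mono2 powr_mono2)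
  have "lp_norm p v < d \<longleftrightarrow> S powr (1/p) < (d powr p) powr (1/p)"
    using p d by (simp add: lp_norm_def S_def powr_powr)
  also have "\<dots> \<longleftrightarrow> S < d powr p"
    using mono S by simp
  finally show ?thesis unfolding S_def .
qed

lemma norm_le_lp_norm:
  assumes p: "p > 0" and s: "summable (\<lambda>m. norm (v m) powr p)"
  shows "norm (v j) \<le> lp_norm p v"
proof -
  have "norm (v j) powr p \<le> (\<Sum>m. norm (v m) powr p)"
    using sum_le_suminf[OF s, of "{j}"] by simp
  then have "(norm (v j) powr p) powr (1/p) \<le> (\<Sum>m. norm (v m) powr p) powr (1/p)"
    using p by (intro powr_mono2) auto
  then show ?thesis using p by (simp add: lp_norm_def powr_powr)
qed

lemma lp_space_tendsto_zero:
  fixes x :: "nat \<Rightarrow> 'a::real_normed_vector"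
  assumes p: "p > 0" and x: "x \<in> lp_space p"
  shows "(\<lambda>m. norm (x m)) \<longlonglongrightarrow> 0"
proof -
  have "(\<lambda>m. norm (x m) powr p) \<longlonglongrightarrow> 0"
    using x by (intro summable_LIMSEQ_zero) (auto simp: lp_space_def)
  then have "(\<lambda>m. (norm (x m) powr p) powr (1/p)) \<longlonglongrightarrow> 0"
    by (rule tendsto_zero_powrI[OF _ tendsto_const]) (use p in auto)
  moreover have "(norm (x m) powr p) powr (1/p) = norm (x m)" for m
    using p by (simp add: powr_powr)
  ultimately show ?thesis by simp
qed

lemma lp_norm_tail_less:
  fixes v :: "nat \<Rightarrow> 'a::real_normed_vector"
  assumes p: "p > 0" and v: "v \<in> lp_space p" and e: "e > 0"
  obtains K where "lp_norm p (\<lambda>m. if m \<le> K then 0 else v m) < e"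
proof -
  define g where "g = (\<lambda>m. norm (v m) powr p)"
  have g: "summable g" using v by (simp add: lp_space_def g_def)
  obtain K where K: "\<forall>n\<ge>K. norm (\<Sum>i. g (i + n)) < e powr p"
    using suminf_exist_split[OF _ g, of "e powr p"] e by auto
  define t where "t m = norm (if m \<le> K then 0 else v m) powr p" for m
  have t_g: "eventually (\<lambda>m. t m = g m) sequentially"
    unfolding eventually_sequentially by (rule exI[of _ "Suc K"]) (auto simp: t_def g_def)
  have t: "summable t" using summable_cong[OF t_g] g by simp
  have "suminf t = (\<Sum>i. t (i + Suc K)) + (\<Sum>i<Suc K. t i)"
    by (rule suminf_split_initial_segment[OF t])
  also have "\<dots> = (\<Sum>i. g (i + Suc K))" by (simp add: t_def g_def)
  also have "\<dots> < e powr p" using K[rule_format, of "Suc K"] by simp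
  finally show ?thesis
    using that lp_norm_less_iff[OF p _ e, of "\<lambda>m. if m \<le> K then 0 else v m"] t
    unfolding t_def by simp
qed

lemma suminf_le_add_single:
  fixes g h :: "nat \<Rightarrow> real"
  assumes "summable g" and "summable h" and "\<And>m. m \<noteq> j \<Longrightarrow> g m \<le> h m" and "h j \<ge> 0"
  shows "suminf g \<le> suminf h + g j"
proof -
  have "suminf g \<le> (\<Sum>m. h m + (if m = j then g m else 0))"
    using assms by (intro suminf_le summable_add) auto
  also have "\<dots> = suminf h + (\<Sum>m. if m = j then g m else 0)"
    using assms(2) by (intro suminf_add[symmetric]) auto
  also have "\<dots> = suminf h + g j"
    by (simp add: sums_unique[OF sums_single, symmetric])
  finally show ?thesis .
qed

lemma lp_norm_diff_fun_upd_less: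
  fixes u y :: "nat \<Rightarrow> 'a::real_normed_vector"
  assumes p: "p \<ge> 1" and u: "u \<in> lp_space p" and y: "y \<in> lp_space p"
    and y': "y(j := c) \<in> lp_space p" and d: "d > 0"
    and close: "lp_norm p (u - y(j := c)) < d" and coord: "norm (u j - y j) \<le> 3 * d"
  shows "lp_norm p (u - y) < 4 * d"
proof -
  have p0: "p > 0" using p by simp
  define g where "g = (\<lambda>m. norm (u m - y m) powr p)"
  define h where "h = (\<lambda>m. norm (u m - (y(j := c)) m) powr p)"
  have g: "summable g" using lp_space_diff[OF p0 u y] by (simp add: lp_space_def g_def)
  have h: "summable h" using lp_space_diff[OF p0 u y'] by (simp add: lp_space_def h_def)
  have "suminf g \<le> suminf h + g j"
    by (rule suminf_le_add_single[OF g h]) (auto simp: g_def h_def)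
  also have "\<dots> < d powr p + (3 * d) powr p"
  proof (rule add_less_le_mono)
    show "suminf h < d powr p"
      using close lp_norm_less_iff[OF p0 _ d, of "u - y(j := c)"] h by (simp add: h_def)
    show "g j \<le> (3 * d) powr p"
      unfolding g_def using coord p0 by (intro powr_mono2) auto
  qed
  also have "\<dots> = (1/4) powr p * (4 * d) powr p + (3/4) powr p * (4 * d) powr p"
    using d by (simp add: powr_mult[symmetric])
  also have "\<dots> \<le> (1/4) * (4 * d) powr p + (3/4) * (4 * d) powr p"
    using p by (intro add_mono mult_right_mono powr_le_one_le) auto
  also have "\<dots> = (4 * d) powr p" by simp
  finally show ?thesis
    using lp_norm_less_iff[OF p0 _, of "u - y" "4 * d"] g d by (simp add: g_def)
qed

lemma pseudo_shift_data_less: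
  assumes d: "pseudo_shift_data f w" and m: "m \<ge> 1"
  shows "m < f m"
  using m
proof (induction m rule: dec_induct)
  case base
  then show ?case using d by (simp add: pseudo_shift_data_def)
next
  case (step m)
  have "f m < f (Suc m)"
    using d step.hyps by (intro strict_mono_onD[of "{1..}" f]) (auto simp: pseudo_shift_data_def)
  then show ?case using step.IH by simp
qed

lemma summable_strict_mono_on_reindex:
  fixes g :: "nat \<Rightarrow> real"
  assumes g0: "\<And>n. g n \<ge> 0" and g: "summable g" and f: "strict_mono_on {1..} f"
  shows "summable (\<lambda>m. if m = 0 then 0 else g (f m))"
proof (rule summableI_nonneg_bounded)
  show "0 \<le> (if m = 0 then 0 else g (f m))" for m using g0 by auto
  fix M
  have "inj_on f {1..<M}"
    using strict_mono_on_imp_inj_on[OF f] by (rule inj_on_subset) auto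
  then have "(\<Sum>m<M. if m = 0 then 0 else g (f m)) = sum g (f ` {1..<M})"
    by (simp add: sum.reindex atLeast1_lessThan_eq_remove0 sum.If_cases Diff_eq)
  also have "\<dots> \<le> suminf g" using g g0 by (intro sum_le_suminf) auto
  finally show "(\<Sum>m<M. if m = 0 then 0 else g (f m)) \<le> suminf g" .
qed

lemma pseudo_shift_lp_space:
  fixes w :: "nat \<Rightarrow> 'a::real_normed_field"
  assumes p: "p > 0" and d: "pseudo_shift_data f w" and x: "x \<in> lp_space p"
  shows "pseudo_shift f w x \<in> lp_space p"
proof -
  obtain B where B: "\<And>m. m \<ge> 1 \<Longrightarrow> norm (w (f m)) \<le> B" and f: "strict_mono_on {1..} f"
    using d by (auto simp: pseudo_shift_data_def)
  have "summable (\<lambda>m. if m = 0 then 0 else norm (x (f m)) powr p)"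
    using x by (intro summable_strict_mono_on_reindex[OF _ _ f]) (auto simp: lp_space_def)
  then have major: "summable (\<lambda>m. B powr p * (if m = 0 then 0 else norm (x (f m)) powr p))"
    by (rule summable_mult)
  have bound: "norm (pseudo_shift f w x m) powr p
      \<le> B powr p * (if m = 0 then 0 else norm (x (f m)) powr p)" for m
  proof (cases "m = 0")
    case False
    then have "norm (w (f m)) powr p \<le> B powr p" using B[of m] p by (intro powr_mono2) auto
    then show ?thesis
      using False by (simp add: pseudo_shift_def norm_mult powr_mult mult_right_mono)
  qed (simp add: pseudo_shift_def)
  have "summable (\<lambda>m. norm (pseudo_shift f w x m) powr p)"
    by (rule summable_comparison_test'[OF major, where N = 0]) (simp add: bound)
  then show ?thesis by (simp add: lp_space_def pseudo_shift_def)
qed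

lemma funpow_lp_space:
  fixes T :: "(nat \<Rightarrow> 'a::real_normed_vector) \<Rightarrow> (nat \<Rightarrow> 'a)"
  assumes "\<And>u. u \<in> lp_space p \<Longrightarrow> T u \<in> lp_space p" and "x \<in> lp_space p"
  shows "(T ^^ n) x \<in> lp_space p"
  by (induction n) (use assms in auto)

lemma funpow_pseudo_shift_eq_if_tail_eq:
  assumes d: "pseudo_shift_data f w" and tail: "\<And>m. m \<ge> a \<Longrightarrow> u m = v m"
  shows "a \<le> m + n \<Longrightarrow> (pseudo_shift f w ^^ n) u m = (pseudo_shift f w ^^ n) v m"
proof (induction n arbitrary: m)
  case 0
  then show ?case using tail by simp
next
  case (Suc n)
  show ?case
  proof (cases "m = 0")
    case False
    then have "a \<le> f m + n" using pseudo_shift_data_less[OF d, of m] Suc.prems by simp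
    then show ?thesis using Suc.IH by (simp add: pseudo_shift_def)
  qed (simp add: pseudo_shift_def)
qed

text \<open>Moving the target y by 2d in a coordinate j where y and the first K iterates are
  small forces every d-approximation of the moved target to happen at a time n \<ge> K.\<close>
lemma s_hypercyclic_vector_approx_late:
  fixes T :: "nat \<Rightarrow> (nat \<Rightarrow> 'a::real_normed_algebra_1) \<Rightarrow> (nat \<Rightarrow> 'a)"
  assumes p: "p \<ge> 1" and T: "\<And>i u. i < N \<Longrightarrow> u \<in> lp_space p \<Longrightarrow> T i u \<in> lp_space p"
    and x: "s_hypercyclic_vector p N T x" and y: "y \<in> lp_space p" and e: "e > 0"
  shows "\<exists>n\<ge>K. \<forall>i<N. lp_norm p ((T i ^^ n) x - y) < e"
proof (cases "N = 0")
  case True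
  then show ?thesis by auto
next
  case False
  have p0: "p > 0" using p by simp
  have orbit: "(T i ^^ n) x \<in> lp_space p" if "i < N" for i n
    using funpow_lp_space[OF T[OF that]] x by (simp add: s_hypercyclic_vector_def)
  define d where "d = e / 4"
  have d: "d > 0" using e by (simp add: d_def)
  have "eventually (\<lambda>j. 1 \<le> j \<and> norm (y j) < d/2 \<and>
      (\<forall>n\<in>{..<K}. norm ((T 0 ^^ n) x j) < d/2)) sequentially"
  proof (intro eventually_conj eventually_ball_finite ballI)
    show "eventually (\<lambda>j. norm (y j) < d/2) sequentially"
      using lp_space_tendsto_zero[OF p0 y] d by (intro order_tendstoD) auto
    show "eventually (\<lambda>j. norm ((T 0 ^^ n) x j) < d/2) sequentially" for n
      using lp_space_tendsto_zero[OF p0 orbit] False d by (intro order_tendstoD) auto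
  qed (simp_all add: eventually_ge_at_top)
  then obtain j where j: "1 \<le> j" and yj: "norm (y j) < d/2"
    and early: "\<forall>n\<in>{..<K}. norm ((T 0 ^^ n) x j) < d/2"
    using eventually_happens'[OF sequentially_bot] by blast
  define c :: 'a where "c = y j + of_real (2 * d)"
  have c: "norm (c - y j) = 2 * d"
    unfolding c_def add_diff_cancel_left' norm_of_real using d by simp
  have y': "y(j := c) \<in> lp_space p" using lp_space_fun_upd[OF y] j by simp
  obtain n where close: "\<And>i. i < N \<Longrightarrow> lp_norm p ((T i ^^ n) x - y(j := c)) < d"
    using x y' d unfolding s_hypercyclic_vector_def by blast
  have coord: "norm ((T i ^^ n) x j - c) < d" if "i < N" for i
    using norm_le_lp_norm[OF p0, of "(T i ^^ n) x - y(j := c)" j] close[OF that]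
      lp_space_diff[OF p0 orbit[OF that] y'] by (simp add: lp_space_def)
  have "K \<le> n"
  proof (rule ccontr)
    assume "\<not> K \<le> n"
    have "2 * d = norm (c - y j)" using c ..
    also have "\<dots> \<le> norm ((T 0 ^^ n) x j - c) + (norm ((T 0 ^^ n) x j) + norm (y j))"
      by (rule norm_diff_triangle_le[OF _ norm_triangle_ineq4]) (simp add: norm_minus_commute)
    also have "\<dots> < d + (d/2 + d/2)"
      using coord[of 0] False early[rule_format, of n] yj \<open>\<not> K \<le> n\<close> by (intro add_strict_mono) auto
    finally show False by simp
  qed
  moreover have "lp_norm p ((T i ^^ n) x - y) < e" if "i < N" for i
  proof -
    have "norm ((T i ^^ n) x j - y j) \<le> norm ((T i ^^ n) x j - c) + norm (c - y j)"
      by (rule norm_diff_triangle_le[of _ c]) simp_all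
    also have "\<dots> \<le> 3 * d" using coord[OF that] c by simp
    finally show ?thesis
      using lp_norm_diff_fun_upd_less[OF p orbit[OF that] y y' d close[OF that]] by (simp add: d_def)
  qed
  ultimately show ?thesis by blast
qed

lemma s_hypercyclic_vector_pseudo_shift_tail_eq:
  fixes ws :: "nat \<Rightarrow> nat \<Rightarrow> 'a::real_normed_field"
  assumes p: "p \<ge> 1" and data: "\<And>i. i < N \<Longrightarrow> pseudo_shift_data (fs i) (ws i)"
    and x: "s_hypercyclic_vector p N (\<lambda>i. pseudo_shift (fs i) (ws i)) x"
    and x': "x' \<in> lp_space p" and tail: "\<And>m. m > K \<Longrightarrow> x' m = x m"
  shows "s_hypercyclic_vector p N (\<lambda>i. pseudo_shift (fs i) (ws i)) x'"
  unfolding s_hypercyclic_vector_def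
proof (intro conjI ballI allI impI x')
  let ?T = "\<lambda>i. pseudo_shift (fs i) (ws i)"
  fix y :: "nat \<Rightarrow> 'a" and e :: real
  assume y: "y \<in> lp_space p" and e: "e > 0"
  have "?T i u \<in> lp_space p" if "i < N" "u \<in> lp_space p" for i u
    using pseudo_shift_lp_space[OF _ data] p that by simp
  then obtain n where n: "Suc K \<le> n" and approx: "\<forall>i<N. lp_norm p ((?T i ^^ n) x - y) < e"
    using s_hypercyclic_vector_approx_late[OF p _ x y e] by blast
  have "(?T i ^^ n) x' = (?T i ^^ n) x" if "i < N" for i
    by (intro ext funpow_pseudo_shift_eq_if_tail_eq[OF data[OF that], where a = "Suc K"])
       (use tail n in auto)
  then show "\<exists>n\<ge>1. \<forall>i<N. lp_norm p ((?T i ^^ n) x' - y) < e"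
    using n approx by (intro exI[of _ n]) auto
qed

lemma lp_space_tail_eq_approx:
  fixes x z :: "nat \<Rightarrow> 'a::real_normed_vector"
  assumes p: "p > 0" and x: "x \<in> lp_space p" and z: "z \<in> lp_space p" and e: "e > 0"
  obtains x' K where "x' \<in> lp_space p" and "\<And>m. m > K \<Longrightarrow> x' m = x m"
    and "lp_norm p (x' - z) < e"
proof -
  obtain K where K: "lp_norm p (\<lambda>m. if m \<le> K then 0 else (x - z) m) < e"
    using lp_norm_tail_less[OF p lp_space_diff[OF p x z] e] .
  define x' where "x' = (\<lambda>m. if m \<le> K then z m else x m)"
  have "eventually (\<lambda>m. x' m = x m) sequentially"
    unfolding x'_def eventually_sequentially by (intro exI[of _ "Suc K"]) auto
  then have "x' \<in> lp_space p"
    using z by (intro lp_space_eventually_eq[OF x]) (simp_all add: x'_def lp_space_def)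
  moreover have "x' - z = (\<lambda>m. if m \<le> K then 0 else (x - z) m)"
    by (auto simp: x'_def)
  ultimately show ?thesis
    using that[of x' K] K by (simp add: x'_def)
qed

theorem corollary3p4:
  fixes p :: real and N :: nat
    and fs :: "nat \<Rightarrow> nat \<Rightarrow> nat"
    and ws :: "nat \<Rightarrow> nat \<Rightarrow> 'a::{real_normed_field, banach}"
  assumes "1 \<le> p" and "N \<ge> 2"
    and "\<And>i. i < N \<Longrightarrow> pseudo_shift_data (fs i) (ws i)"
  shows "s_hypercyclic p N (\<lambda>i. pseudo_shift (fs i) (ws i)) \<longleftrightarrow>
         densely_s_hypercyclic p N (\<lambda>i. pseudo_shift (fs i) (ws i))"
proof
  let ?T = "\<lambda>i. pseudo_shift (fs i) (ws i)"
  assume "s_hypercyclic p N ?T"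
  then obtain x where x: "s_hypercyclic_vector p N ?T x" by (auto simp: s_hypercyclic_def)
  show "densely_s_hypercyclic p N ?T"
    unfolding densely_s_hypercyclic_def
  proof (intro ballI allI impI)
    fix z :: "nat \<Rightarrow> 'a" and e :: real
    assume z: "z \<in> lp_space p" and e: "e > 0"
    have p: "p > 0" and x_lp: "x \<in> lp_space p"
      using assms(1) x by (simp_all add: s_hypercyclic_vector_def)
    obtain x' K where "x' \<in> lp_space p" and "\<And>m. m > K \<Longrightarrow> x' m = x m"
      and "lp_norm p (x' - z) < e"
      using lp_space_tail_eq_approx[OF p x_lp z e] by blast
    moreover from this(1,2) have "s_hypercyclic_vector p N ?T x'"
      by (intro s_hypercyclic_vector_pseudo_shift_tail_eq[OF assms(1) _ x]) (simp_all add: assms(3))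
    ultimately show "\<exists>x. s_hypercyclic_vector p N ?T x \<and> lp_norm p (x - z) < e"
      by blast
  qed
next
  assume "densely_s_hypercyclic p N (\<lambda>i. pseudo_shift (fs i) (ws i))"
  moreover have "(\<lambda>_. 0) \<in> lp_space p" by (simp add: lp_space_def)
  ultimately show "s_hypercyclic p N (\<lambda>i. pseudo_shift (fs i) (ws i))"
    unfolding densely_s_hypercyclic_def s_hypercyclic_def by (meson zero_less_one)
qed

end
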